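(* Let $f:[0,1]^n \to \mathbb{R}_+$ be a differentiable DR-submodular function, let $\vec{x}^* \in \arg\max_{\vec{z}\in[0,1]^n} f(\vec{z})$, and let $\alpha \ge 0$ be a constant. Consider a differentiable trajectory $(\vec{x}^{(t)}, \vec{y}^{(t)})_{0 \le t \le 1}$ in $[0,1]^n \times [0,1]^n$ with $\vec{x}^{(0)} = \vec{0}$, $\vec{y}^{(0)} = \vec{1}$, $\vec{x}^{(t)} \le \vec{y}^{(t)}$ for all $t$, and $\vec{x}^{(1)} = \vec{y}^{(1)}$. Let $\vec{p}^{(t)}$ be the projection of $\vec{x}^*$ onto the box $[\vec{x}^{(t)}, \vec{y}^{(t)}]$, i.e. $p^{(t)}_i = \min\{\max\{x^*_i, x^{(t)}_i\}, y^{(t)}_i\}$. Suppose that for all $t \in [0,1]$ $$\frac{d}{dt}\left(\frac{1}{2}\left(f(\vec{x}^{(t)}) + f(\vec{y}^{(t)})\right) + \alpha f(\vec{p}^{(t)})\right) \ge 0,$$ equivalently $\frac12\left(\langle \nabla f(\vec{x}^{(t)}), \dot{\vec{x}}^{(t)}\rangle + \langle \nabla f(\vec{y}^{(t)}), \dot{\vec{y}}^{(t)}\rangle\right) + \alpha \langle \nabla f(\vec{p}^{(t)}), \dot{\vec{p}}^{(t)}\rangle \ge 0$. Then $f(\vec{x}^{(1)}) \ge \frac{\alpha}{1+\alpha} f(\vec{x}^* )$.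
   Context: A function $f:[0,1]^n \to \mathbb{R}_+$ is DR-submodular if for all $\vec{x}\le\vec{y}$ in $[0,1]^n$ (coordinate-wise), all $i\in[n]$ and $\delta\in[0,1]$ with $\vec{x}+\delta\vec{1}_{\{i\}}, \vec{y}+\delta\vec{1}_{\{i\}} \in [0,1]^n$, $f(\vec{x}+\delta\vec{1}_{\{i\}})-f(\vec{x}) \ge f(\vec{y}+\delta\vec{1}_{\{i\}})-f(\vec{y})$. For differentiable $f$ this is equivalent to $\nabla f(\vec{x}) \ge \nabla f(\vec{y})$ whenever $\vec{x}\le\vec{y}$. Dots denote time derivatives. *)

theory Defs
  imports "HOL-Analysis.Analysis"
begin

definition unit_cube :: "(real ^ 'n) set" where
  "unit_cube = {x. \<forall>i. 0 \<le> x $ i \<and> x $ i \<le> 1}"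

definition dr_submodular :: "(real ^ 'n \<Rightarrow> real) \<Rightarrow> bool" where
  "dr_submodular f \<longleftrightarrow>
     (\<forall>x\<in>unit_cube. \<forall>y\<in>unit_cube. \<forall>i. \<forall>\<delta>\<in>{0..1}.
        (\<forall>j. x $ j \<le> y $ j) \<longrightarrow>
        x + \<delta> *\<^sub>R axis i 1 \<in> unit_cube \<longrightarrow> y + \<delta> *\<^sub>R axis i 1 \<in> unit_cube \<longrightarrow>
        f (x + \<delta> *\<^sub>R axis i 1) - f x \<ge> f (y + \<delta> *\<^sub>R axis i 1) - f y)"

definition box_proj :: "real ^ 'n \<Rightarrow> real ^ 'n \<Rightarrow> real ^ 'n \<Rightarrow> real ^ 'n" where
  "box_proj z a b = (\<chi> i. min (max (z $ i) (a $ i)) (b $ i))"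

end

theory Submission
  imports Defs
begin

text \<open>The potential \<open>(f x + f y)/2 + \<alpha> f p\<close> is nondecreasing along the trajectory.
  At \<open>t = 0\<close> the box is the whole cube, so \<open>p = x\<^sup>*\<close> and the potential is at least
  \<open>\<alpha> f(x\<^sup>*)\<close> by nonnegativity of \<open>f\<close>; at \<open>t = 1\<close> the box collapses to the point \<open>x(1)\<close>,
  so the potential equals \<open>(1 + \<alpha>) f(x(1))\<close>.
  DR-submodularity and the optimality of \<open>x\<^sup>*\<close> are only needed to establish the
  monotonicity of the potential, which is a hypothesis here, so the proof does not use them.\<close>

lemma nonneg_derivative_within_imp_le:
  fixes \<phi> :: "real \<Rightarrow> real"
  assumes "a \<le> b"
    and deriv: "\<forall>t\<in>{a..b}. \<exists>D. D \<ge> 0 \<and> (\<phi> has_real_derivative D) (at t within {a..b})"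
  shows "\<phi> a \<le> \<phi> b"
proof -
  obtain D where D: "\<And>t. t \<in> {a..b} \<Longrightarrow> D t \<ge> 0 \<and> (\<phi> has_real_derivative D t) (at t within {a..b})"
    using deriv by metis
  have "continuous_on {a..b} \<phi>"
    by (rule DERIV_continuous_on[where D = D]) (use D in blast)
  moreover have "\<exists>D. DERIV \<phi> t :> D \<and> D \<ge> 0" if "a < t" "t < b" for t
    using D[of t] that by (auto simp: at_within_Icc_at)
  ultimately show ?thesis
    using DERIV_nonneg_imp_increasing_open[OF \<open>a \<le> b\<close>] by blast
qed

lemma box_proj_eq_self:
  assumes "\<forall>i. a $ i \<le> z $ i \<and> z $ i \<le> b $ i"
  shows "box_proj z a b = z"
  using assms by (simp add: box_proj_def vec_eq_iff)

lemma box_proj_unit_cube: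
  assumes "z \<in> unit_cube"
  shows "box_proj z 0 1 = z"
  using assms by (intro box_proj_eq_self) (simp add: unit_cube_def)

lemma box_proj_degenerate: "box_proj z a a = a"
  by (simp add: box_proj_def vec_eq_iff)

theorem lemma3:
  fixes f :: "real ^ 'n \<Rightarrow> real"
    and xs :: "real ^ 'n"
    and \<alpha> :: real
    and x y :: "real \<Rightarrow> real ^ 'n"
  assumes f_nonneg: "\<forall>z\<in>unit_cube. 0 \<le> f z"
    and f_diff: "\<forall>z\<in>unit_cube. f differentiable (at z within unit_cube)"
    and f_dr: "dr_submodular f"
    and xs_cube: "xs \<in> unit_cube"
    and xs_max: "\<forall>z\<in>unit_cube. f z \<le> f xs"
    and alpha: "\<alpha> \<ge> 0"
    and x_diff: "\<forall>t\<in>{0..1}. x differentiable (at t within {0..1})"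
    and y_diff: "\<forall>t\<in>{0..1}. y differentiable (at t within {0..1})"
    and x_cube: "\<forall>t\<in>{0..1}. x t \<in> unit_cube"
    and y_cube: "\<forall>t\<in>{0..1}. y t \<in> unit_cube"
    and x0: "x 0 = 0"
    and y0: "y 0 = 1"
    and xy: "\<forall>t\<in>{0..1}. \<forall>i. x t $ i \<le> y t $ i"
    and x1y1: "x 1 = y 1"
    and deriv_nonneg: "\<forall>t\<in>{0..1}. \<exists>D. D \<ge> 0 \<and>
        ((\<lambda>s. (f (x s) + f (y s)) / 2 + \<alpha> * f (box_proj xs (x s) (y s)))
           has_real_derivative D) (at t within {0..1})"
  shows "f (x 1) \<ge> \<alpha> / (1 + \<alpha>) * f xs"
proof -
  define \<phi> where
    "\<phi> = (\<lambda>s. (f (x s) + f (y s)) / 2 + \<alpha> * f (box_proj xs (x s) (y s)))"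
  have "\<phi> 0 \<le> \<phi> 1"
    using nonneg_derivative_within_imp_le[of 0 1 \<phi>] deriv_nonneg by (simp add: \<phi>_def)
  moreover have "\<alpha> * f xs \<le> \<phi> 0"
  proof -
    have "0 \<le> f (x 0)" "0 \<le> f (y 0)"
      using f_nonneg x_cube y_cube by auto
    then show ?thesis
      by (simp add: \<phi>_def x0 y0 box_proj_unit_cube[OF xs_cube])
  qed
  moreover have "\<phi> 1 = (1 + \<alpha>) * f (x 1)"
    by (simp add: \<phi>_def x1y1 box_proj_degenerate algebra_simps)
  ultimately have "\<alpha> * f xs \<le> (1 + \<alpha>) * f (x 1)"
    by linarith
  with alpha show ?thesis
    by (simp add: divide_simps mult.commute)
qed

end
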